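(* Let $\varepsilon>0$, let $a,b\in\mathbb{R}^d$ with $a\ne b$, and let $P_{ab}$ be a polygonal $ab$-path with $\|P_{ab}\|\le(1+\varepsilon)\|ab\|$. For $\alpha\in[0,\pi/2]$ let $E(\alpha)$ be the set of edges $e$ of $P_{ab}$ with $\angle(ab,e)<\alpha$. Then for every integer $i$ with $1\le i\le\lfloor(\pi/2)/\sqrt{\varepsilon}\rfloor$ we have $\|E(i\sqrt{\varepsilon})\|\ge(1-2/i^2)\,\|ab\|$, where $\|E(\alpha)\|$ denotes the total length of the edges in $E(\alpha)$.
   Context: For undirected segments $e_1,e_2$ with unit direction vectors $\pm\vec u_1,\pm\vec u_2$, $\angle(e_1,e_2)=\arccos|\vec u_1\cdot\vec u_2|\in[0,\pi/2]$. *)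

theory Defs
  imports "HOL-Analysis.Analysis"
begin

text \<open>Angle between undirected segments with direction vectors u, v:
  arccos of the absolute value of the cosine, in [0, pi/2].
  (Only meaningful for nonzero u, v.)\<close>
definition seg_angle :: "'a::euclidean_space \<Rightarrow> 'a \<Rightarrow> real" where
  "seg_angle u v = arccos (\<bar>u \<bullet> v\<bar> / (norm u * norm v))"

text \<open>A polygonal path is given by its list of vertices ps; its edges are
  the segments [ps!k, ps!(k+1)] for k < length ps - 1.\<close>
definition path_length :: "'a::euclidean_space list \<Rightarrow> real" where
  "path_length ps = (\<Sum>k<length ps - 1. dist (ps!k) (ps!Suc k))"

definition small_angle_edges_length ::
  "'a::euclidean_space \<Rightarrow> 'a \<Rightarrow> 'a list \<Rightarrow> real \<Rightarrow> real" where
  "small_angle_edges_length a b ps \<alpha> =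
     (\<Sum>k\<in>{k. k < length ps - 1 \<and> seg_angle (b - a) (ps!Suc k - ps!k) < \<alpha>}.
        dist (ps!k) (ps!Suc k))"

end

theory Submission
  imports Defs
begin

text \<open>Project the path onto the direction of ab. Edges at angle at least \<alpha>
  contribute at most cos \<alpha> times their length, so
  |ab| \<le> |E(\<alpha>)| + cos \<alpha> (|P| - |E(\<alpha>)|) \<le> |E(\<alpha>)| + cos \<alpha> ((1+\<epsilon>)|ab| - |E(\<alpha>)|).
  With the Taylor bound cos \<alpha> \<le> 2 / (2 + \<alpha>^2) and \<alpha>^2 = i^2 \<epsilon> this
  rearranges to |E(\<alpha>)| \<ge> (1 - 2/i^2) |ab|.\<close>

lemma cos_le_taylor4:
  fixes x :: real
  assumes "0 \<le> x" "x \<le> pi"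
  shows "cos x \<le> 1 - x^2/2 + x^4/24"
proof (cases "x = 0")
  case False
  then obtain t where t: "0 < t" "t < x"
    and cos_x: "cos x = (\<Sum>m<5. cos_coeff m * x ^ m) + (cos (t + 1/2 * real 5 * pi) / fact 5) * x ^ 5"
    using Maclaurin_cos_expansion2[of x 5] assms by auto
  have "{..<5::nat} = {0,1,2,3,4}" by auto
  then have poly: "(\<Sum>m<5. cos_coeff m * x ^ m) = 1 - x^2/2 + x^4/24"
    by (simp add: cos_coeff_def fact_numeral)
  have "cos (t + 1/2 * real 5 * pi) = cos ((t + pi/2) + 2*pi)"
    by (simp add: algebra_simps)
  also have "\<dots> = cos (t + pi/2)" by (rule cos_periodic)
  also have "\<dots> = - sin t" by (simp add: cos_add)
  finally have "cos (t + 1/2 * real 5 * pi) \<le> 0"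
    using t assms sin_ge_zero[of t] by simp
  then have "(cos (t + 1/2 * real 5 * pi) / fact 5) * x ^ 5 \<le> 0"
    using assms by (simp add: divide_nonpos_pos mult_nonpos_nonneg)
  then show ?thesis using cos_x poly by linarith
qed simp

lemma cos_mult_two_plus_square_le:
  fixes x :: real
  assumes "0 \<le> x" "x \<le> pi/2"
  shows "cos x * (2 + x^2) \<le> 2"
proof -
  have "x^2 \<le> 2^2" using assms pi_half_less_two by (intro power_mono) auto
  moreover have "(1 - x^2/2 + x^4/24) * (2 + x^2) = 2 - x^2 * x^2 * (10 - x^2) / 24"
    by (simp add: field_simps power2_eq_square power4_eq_xxxx)
  ultimately have "(1 - x^2/2 + x^4/24) * (2 + x^2) \<le> 2"
    by simp
  moreover have "cos x * (2 + x^2) \<le> (1 - x^2/2 + x^4/24) * (2 + x^2)"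
    using cos_le_taylor4[of x] assms by (intro mult_right_mono) auto
  ultimately show ?thesis by linarith
qed

lemma inner_le_cos_if_seg_angle_ge:
  fixes v e :: "'a::euclidean_space"
  assumes "\<alpha> \<le> seg_angle v e" "0 \<le> \<alpha>" "\<alpha> \<le> pi"
  shows "\<bar>v \<bullet> e\<bar> \<le> cos \<alpha> * (norm v * norm e)"
proof (cases "v = 0 \<or> e = 0")
  case False
  define c where "c = \<bar>v \<bullet> e\<bar> / (norm v * norm e)"
  have pos: "norm v * norm e > 0" using False by simp
  have c_bounds: "0 \<le> c" "c \<le> 1"
    using pos Cauchy_Schwarz_ineq2[of v e] unfolding c_def by auto
  have "cos (arccos c) \<le> cos \<alpha>"
    using assms c_bounds arccos_bounded[of c] unfolding seg_angle_def c_def[symmetric]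
    by (intro cos_monotone_0_pi_le) auto
  then have "c \<le> cos \<alpha>" using c_bounds by simp
  then show ?thesis using pos unfolding c_def by (simp add: divide_le_eq)
qed auto

lemma sum_edges_eq_last_minus_hd:
  fixes ps :: "'a::ab_group_add list"
  assumes "ps \<noteq> []"
  shows "(\<Sum>k<length ps - 1. ps!Suc k - ps!k) = last ps - hd ps"
  using sum_lessThan_telescope[of "nth ps" "length ps - 1"] assms
  by (simp add: last_conv_nth hd_conv_nth)

lemma norm_le_sum_norm_plus_cos_sum_norm:
  fixes e :: "nat \<Rightarrow> 'a::euclidean_space"
  assumes "finite I" "S \<subseteq> I" "(\<Sum>k\<in>I. e k) = v" "v \<noteq> 0"
    and "\<And>k. k \<in> I - S \<Longrightarrow> v \<bullet> e k \<le> c * (norm v * norm (e k))"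
  shows "norm v \<le> (\<Sum>k\<in>S. norm (e k)) + c * (\<Sum>k\<in>I - S. norm (e k))"
proof -
  have "norm v * norm v = v \<bullet> (\<Sum>k\<in>I. e k)"
    using assms(3) by (simp add: dot_square_norm power2_eq_square)
  also have "\<dots> = (\<Sum>k\<in>I. v \<bullet> e k)" by (rule inner_sum_right)
  also have "\<dots> = (\<Sum>k\<in>S. v \<bullet> e k) + (\<Sum>k\<in>I - S. v \<bullet> e k)"
    using assms(1,2) by (simp add: sum.subset_diff[of S I] add.commute)
  also have "\<dots> \<le> (\<Sum>k\<in>S. norm v * norm (e k)) + (\<Sum>k\<in>I - S. c * (norm v * norm (e k)))"
    using assms(5) by (intro add_mono sum_mono norm_cauchy_schwarz) auto
  also have "\<dots> = norm v * ((\<Sum>k\<in>S. norm (e k)) + c * (\<Sum>k\<in>I - S. norm (e k)))"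
    by (simp add: sum_distrib_left algebra_simps)
  finally show ?thesis using assms(4) by simp
qed

lemma dist_le_small_angle_edges_length_plus_cos:
  fixes a b :: "'a::euclidean_space"
  assumes "ps \<noteq> []" "hd ps = a" "last ps = b" "a \<noteq> b" "0 \<le> \<alpha>" "\<alpha> \<le> pi"
  shows "dist a b \<le> small_angle_edges_length a b ps \<alpha>
           + cos \<alpha> * (path_length ps - small_angle_edges_length a b ps \<alpha>)"
proof -
  define e where "e k = ps!Suc k - ps!k" for k
  define I where "I = {..<length ps - 1}"
  define S where "S = {k \<in> I. seg_angle (b - a) (e k) < \<alpha>}"
  have S_sub: "S \<subseteq> I" unfolding S_def by auto
  have edge_length: "dist (ps!k) (ps!Suc k) = norm (e k)" for k
    unfolding e_def by (simp add: dist_norm norm_minus_commute)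
  have small: "small_angle_edges_length a b ps \<alpha> = (\<Sum>k\<in>S. norm (e k))"
    unfolding small_angle_edges_length_def S_def I_def e_def edge_length[unfolded e_def]
    by simp
  have "path_length ps = (\<Sum>k\<in>I. norm (e k))"
    unfolding path_length_def I_def edge_length by simp
  also have "\<dots> = (\<Sum>k\<in>S. norm (e k)) + (\<Sum>k\<in>I - S. norm (e k))"
    using sum.subset_diff[OF S_sub] by (simp add: I_def add.commute)
  finally have large: "(\<Sum>k\<in>I - S. norm (e k)) = path_length ps - small_angle_edges_length a b ps \<alpha>"
    using small by simp
  have "norm (b - a) \<le> (\<Sum>k\<in>S. norm (e k)) + cos \<alpha> * (\<Sum>k\<in>I - S. norm (e k))"
  proof (rule norm_le_sum_norm_plus_cos_sum_norm)
    show "(\<Sum>k\<in>I. e k) = b - a"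
      using sum_edges_eq_last_minus_hd[OF assms(1)] assms(2,3) unfolding I_def e_def by simp
    fix k assume "k \<in> I - S"
    then have "\<alpha> \<le> seg_angle (b - a) (e k)" unfolding S_def by auto
    then show "(b - a) \<bullet> e k \<le> cos \<alpha> * (norm (b - a) * norm (e k))"
      using inner_le_cos_if_seg_angle_ge assms(5,6) by fastforce
  qed (use assms(4) in \<open>auto simp: I_def S_def\<close>)
  then show ?thesis using small large by (simp add: dist_norm norm_minus_commute)
qed

lemma lower_bound_from_projection:
  fixes D L E c \<epsilon> \<delta> :: real
  assumes "L \<le> (1 + \<epsilon>) * D" "D \<le> E + c * (L - E)" "0 \<le> c" "c < 1" "0 \<le> D"
    and "c * \<epsilon> \<le> \<delta> * (1 - c)"
  shows "(1 - \<delta>) * D \<le> E"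
proof -
  have "c * (L - E) \<le> c * ((1 + \<epsilon>) * D - E)"
    using assms(1,3) by (intro mult_left_mono) auto
  moreover have "c * \<epsilon> * D \<le> \<delta> * (1 - c) * D"
    using assms(5,6) by (intro mult_right_mono) auto
  ultimately have "(1 - c) * ((1 - \<delta>) * D) \<le> (1 - c) * E"
    using assms(2) by (simp add: algebra_simps)
  then show ?thesis using assms(4) by simp
qed

theorem lemma2:
  fixes a b :: "'a::euclidean_space" and ps :: "'a list" and \<epsilon> :: real and i :: nat
  assumes "\<epsilon> > 0"
    and "a \<noteq> b"
    and "ps \<noteq> []" and "hd ps = a" and "last ps = b"
    and "path_length ps \<le> (1 + \<epsilon>) * dist a b"
    and "1 \<le> i" and "real i \<le> of_int \<lfloor>(pi / 2) / sqrt \<epsilon>\<rfloor>"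
  shows "small_angle_edges_length a b ps (real i * sqrt \<epsilon>) \<ge> (1 - 2 / (real i)\<^sup>2) * dist a b"
proof -
  define \<alpha> where "\<alpha> = real i * sqrt \<epsilon>"
  have "real i \<le> (pi / 2) / sqrt \<epsilon>" using assms(8) by linarith
  then have \<alpha>_range: "0 < \<alpha>" "\<alpha> \<le> pi / 2"
    using assms(1,7) unfolding \<alpha>_def by (auto simp: le_divide_eq)
  have cos_bound: "cos \<alpha> * (2 + real i ^ 2 * \<epsilon>) \<le> 2"
    using cos_mult_two_plus_square_le[of \<alpha>] \<alpha>_range assms(1)
    unfolding \<alpha>_def by (simp add: power_mult_distrib)
  have "0 \<le> cos \<alpha>" using \<alpha>_range by (intro cos_ge_zero) auto
  moreover have "cos \<alpha> < 1" using cos_monotone_0_pi[of 0 \<alpha>] \<alpha>_range by simp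
  moreover have "cos \<alpha> * \<epsilon> \<le> 2 / (real i)\<^sup>2 * (1 - cos \<alpha>)"
    using cos_bound assms(7) by (simp add: field_simps)
  ultimately show ?thesis
    using lower_bound_from_projection[OF assms(6)]
      dist_le_small_angle_edges_length_plus_cos[OF assms(3,4,5,2), of \<alpha>] \<alpha>_range
    unfolding \<alpha>_def by simp
qed

end
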